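(* Let $X,Y$ be finite abelian groups and $Q\in M_{X\times Y}(\mathbb T)$ arbitrary. Then for $i,j\in X$ the matrix $\sum_{a\in Y}W_{ia,jb}$ does not depend on $b\in Y$, and there is a $*$-representation $\pi:C(Y\wr_*X)\to M_{X\times Y}(\mathbb C)$ with $$\pi(u_{ab}^{(i)})=\sum_{j\in X}W_{ia,jb},\qquad \pi(v_{ij})=\sum_{a\in Y}W_{ia,jb},$$ such that $\pi_Q=\pi\circ\Phi$, where $\Phi:C(S^+_{X\times Y})\to C(Y\wr_*X)$ is the morphism $u_{ia,jb}\mapsto u^{(i)}_{ab}v_{ij}$.
   Context: Finite abelian groups are written additively. For a finite abelian group $Z\simeq\mathbb Z_{N_1}\times\cdots\times\mathbb Z_{N_s}$, $F_Z=F_{N_1}\otimes\cdots\otimes F_{N_s}$ with $F_n=(e^{2\pi ijk/n})_{j,k\in\mathbb Z_n}$. Let $F=F_X$, $L=F_Y$, $M=|X|$, $N=|Y|$, and $(W_{ia,jb})_{kc,ld}=\frac{1}{MN}\frac{Q_{ic}Q_{jd}}{Q_{id}Q_{jc}}F_{i-j,k-l}L_{a-b,c-d}$. $C(S_Z^+)$ is the universal $C^*$-algebra generated by the entries of a magic matrix indexed by a finite set $Z$ (entries orthogonal projections, rows and columns summing to $1$), with $\Delta(u_{ij})=\sum_ku_{ik}\otimes u_{kj}$; $\pi_Q:C(S^+_{X\times Y})\to M_{X\times Y}(\mathbb C)$ is $u_{ia,jb}\mapsto W_{ia,jb}$. $C(Y)$ is regarded as the quotient of $C(S_Y^+)$ by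 the relations $u_{ab}=u_{cd}$ whenever $a-b=c-d$ (so $u_{ab}$ is the indicator function of $a-b$), and similarly $C(X)$ as a quotient of $C(S_X^+)$ with generators $v_{ij}$. The free wreath product $C(Y\wr_*X)$ is the quotient of the free product $C(Y)^{*X}*C(X)$ (with $u^{(i)}_{ab}$ the generators of the $i$-th copy of $C(Y)$) by the relations $[u^{(i)}_{ab},v_{ij}]=0$, with the Hopf structure making $w_{ia,jb}=u^{(i)}_{ab}v_{ij}$ a magic corepresentation. *)

theory Defs
  imports Complex_Main
begin

text \<open>A finite abelian group is presented by a list of moduli ns = [N_1,...,N_s];
  its elements are lists x of length s with x!k < N_k, with componentwise
  addition modulo N_k.\<close>

definition grp :: "nat list \<Rightarrow> nat list set" where
  "grp ns = {x. length x = length ns \<and> (\<forall>k<length ns. x ! k < ns ! k)}"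

definition grp_add :: "nat list \<Rightarrow> nat list \<Rightarrow> nat list \<Rightarrow> nat list" where
  "grp_add ns x y = map (\<lambda>k. (x ! k + y ! k) mod (ns ! k)) [0..<length ns]"

definition grp_diff :: "nat list \<Rightarrow> nat list \<Rightarrow> nat list \<Rightarrow> nat list" where
  "grp_diff ns x y = map (\<lambda>k. (x ! k + (ns ! k - y ! k)) mod (ns ! k)) [0..<length ns]"

text \<open>Fourier matrix F_Z = F_{N_1} (x) ... (x) F_{N_s}, F_n = (e^{2 pi i jk/n}).\<close>
definition fourier :: "nat list \<Rightarrow> nat list \<Rightarrow> nat list \<Rightarrow> complex" where
  "fourier ns x y = (\<Prod>k<length ns. cis (2 * pi * real (x ! k * y ! k) / real (ns ! k)))"

type_synonym idx = "nat list \<times> nat list"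
type_synonym cmat = "idx \<Rightarrow> idx \<Rightarrow> complex"

definition idxset :: "nat list \<Rightarrow> nat list \<Rightarrow> idx set" where
  "idxset ns ms = grp ns \<times> grp ms"

definition mmult :: "idx set \<Rightarrow> cmat \<Rightarrow> cmat \<Rightarrow> cmat" where
  "mmult I A B = (\<lambda>p q. \<Sum>r\<in>I. A p r * B r q)"

definition mone :: cmat where
  "mone = (\<lambda>p q. if p = q then 1 else 0)"

definition meq :: "idx set \<Rightarrow> cmat \<Rightarrow> cmat \<Rightarrow> bool" where
  "meq I A B \<longleftrightarrow> (\<forall>p\<in>I. \<forall>q\<in>I. A p q = B p q)"

definition is_proj :: "idx set \<Rightarrow> cmat \<Rightarrow> bool" where
  "is_proj I P \<longleftrightarrow> meq I (mmult I P P) P \<and> (\<forall>p\<in>I. \<forall>q\<in>I. cnj (P q p) = P p q)"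

definition magic :: "idx set \<Rightarrow> nat list set \<Rightarrow> (nat list \<Rightarrow> nat list \<Rightarrow> cmat) \<Rightarrow> bool" where
  "magic I Z u \<longleftrightarrow> (\<forall>x\<in>Z. \<forall>y\<in>Z. is_proj I (u x y))
     \<and> (\<forall>x\<in>Z. meq I (\<lambda>p q. \<Sum>y\<in>Z. u x y p q) mone)
     \<and> (\<forall>y\<in>Z. meq I (\<lambda>p q. \<Sum>x\<in>Z. u x y p q) mone)"

text \<open>The data of a *-representation of C(Y wr_* X) on C^{X x Y}: images U i a b of
  u^{(i)}_{ab} and V i j of v_{ij}, satisfying all defining relations (so, by the universal
  property, they define a unique *-representation).\<close>
definition wreath_rep :: "nat list \<Rightarrow> nat list \<Rightarrow>
    (nat list \<Rightarrow> nat list \<Rightarrow> nat list \<Rightarrow> cmat) \<Rightarrow> (nat list \<Rightarrow> nat list \<Rightarrow> cmat) \<Rightarrow> bool" where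
  "wreath_rep ns ms U V \<longleftrightarrow>
     (let I = idxset ns ms; X = grp ns; Y = grp ms in
       (\<forall>i\<in>X. magic I Y (U i)
          \<and> (\<forall>a\<in>Y. \<forall>b\<in>Y. \<forall>c\<in>Y. \<forall>d\<in>Y. grp_diff ms a b = grp_diff ms c d \<longrightarrow> meq I (U i a b) (U i c d)))
     \<and> magic I X V
     \<and> (\<forall>i\<in>X. \<forall>j\<in>X. \<forall>k\<in>X. \<forall>l\<in>X. grp_diff ns i j = grp_diff ns k l \<longrightarrow> meq I (V i j) (V k l))
     \<and> (\<forall>i\<in>X. \<forall>j\<in>X. \<forall>a\<in>Y. \<forall>b\<in>Y. meq I (mmult I (U i a b) (V i j)) (mmult I (V i j) (U i a b))))"

definition Wm :: "nat list \<Rightarrow> nat list \<Rightarrow> (nat list \<Rightarrow> nat list \<Rightarrow> complex) \<Rightarrow>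
    nat list \<Rightarrow> nat list \<Rightarrow> nat list \<Rightarrow> nat list \<Rightarrow> cmat" where
  "Wm ns ms Q i a j b = (\<lambda>(k, c) (l, d).
     1 / (of_nat (card (grp ns)) * of_nat (card (grp ms)))
     * (Q i c * Q j d / (Q i d * Q j c))
     * fourier ns (grp_diff ns i j) (grp_diff ns k l)
     * fourier ms (grp_diff ms a b) (grp_diff ms c d))"

end

theory Submission
  imports Defs
begin

text \<open>The vectors xi(a,j), (a,j) \<in> Y \<times> X, with entries
  xi(a,j)(k,c) = Q(i,c)/Q(j,c) \<cdot> F(i,k)/F(j,k) \<cdot> L(a,c)/L(b,c) (these are \<open>wvec i b\<close> below)
  are pairwise orthogonal with squared norm |X||Y| by orthogonality of characters, and W(ia,jb)
  is the rank-one projection onto xi(a,j). Hence \<open>\<Sum>\<^sub>j W(ia,jb)\<close> and \<open>\<Sum>\<^sub>a W(ia,jb)\<close> are the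
  projections onto the spans of {xi(a,j) | j \<in> X} and {xi(a,j) | a \<in> Y}, and the latter is
  computed to be independent of b (and of Q). Projections onto spans of subfamilies of one
  orthogonal family multiply by intersecting the subfamilies, so the two commute and their
  product is the projection onto xi(a,j), i.e. W(ia,jb). The row and column sums required for
  the magic matrices again reduce to orthogonality of characters.\<close>

lemma grp_Nil: "grp [] = {[]}"
  by (auto simp: grp_def)

lemma grp_Cons: "grp (n # ns) = (\<lambda>(h, t). h # t) ` ({..<n} \<times> grp ns)"
proof (rule set_eqI)
  fix x show "x \<in> grp (n # ns) \<longleftrightarrow> x \<in> (\<lambda>(h, t). h # t) ` ({..<n} \<times> grp ns)"
  proof
    assume "x \<in> grp (n # ns)"
    then obtain h t where x: "x = h # t" and l: "length t = length ns"
      and c: "\<forall>k<Suc (length ns). x ! k < (n # ns) ! k"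
      by (cases x) (auto simp: grp_def)
    have "h < n" using c[rule_format, of 0] x by simp
    moreover have "t \<in> grp ns" using l c x by (auto simp: grp_def)
    ultimately show "x \<in> (\<lambda>(h, t). h # t) ` ({..<n} \<times> grp ns)" using x by auto
  next
    assume "x \<in> (\<lambda>(h, t). h # t) ` ({..<n} \<times> grp ns)"
    then show "x \<in> grp (n # ns)" by (auto simp: grp_def less_Suc_eq_0_disj)
  qed
qed

lemma inj_on_Cons_pair: "inj_on (\<lambda>(h, t). h # t) A"
  by (auto simp: inj_on_def)

lemma finite_grp: "finite (grp ns)"
  by (induction ns) (auto simp: grp_Nil grp_Cons)

lemma card_grp: "card (grp ns) = prod_list ns"
  by (induction ns)
    (auto simp: grp_Nil grp_Cons card_image inj_on_Cons_pair card_cartesian_product)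

lemma card_grp_pos: "\<forall>n\<in>set ns. 0 < n \<Longrightarrow> 0 < card (grp ns)"
  unfolding card_grp by (induction ns) auto

lemma replicate_zero_in_grp: "\<forall>n\<in>set ns. 0 < n \<Longrightarrow> replicate (length ns) 0 \<in> grp ns"
  by (auto simp: grp_def)

lemma sum_grp_Cons: "(\<Sum>z\<in>grp (n # ns). f z) = (\<Sum>h<n. \<Sum>t\<in>grp ns. f (h # t))"
  unfolding grp_Cons sum.reindex[OF inj_on_Cons_pair] comp_def sum.cartesian_product
  by (simp add: split_def)

subsection \<open>Characters\<close>

lemma fourier_Cons:
  "fourier (n # ns) (x # xs) (k # ks) = cis (2 * pi * real (x * k) / real n) * fourier ns xs ks"
  unfolding fourier_def by (simp add: prod.lessThan_Suc_shift del: prod.lessThan_Suc)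

lemma norm_fourier: "norm (fourier ns x y) = 1"
  unfolding fourier_def by (simp add: prod_norm[symmetric])

lemma fourier_neq_zero: "fourier ns x y \<noteq> 0"
  using norm_fourier[of ns x y] by auto

lemma fourier_commute: "fourier ns x y = fourier ns y x"
  unfolding fourier_def by (simp add: mult.commute)

lemma sum_cis_roots_of_unity_ratio:
  assumes "x < n" "y < n"
  shows "(\<Sum>h<n. cis (2 * pi * (real x * real h) / real n) / cis (2 * pi * (real y * real h) / real n))
     = (if x = y then of_nat n else 0)"
proof -
  have n: "n > 0" using assms by simp
  let ?z = "cis (2 * pi * real x / real n) / cis (2 * pi * real y / real n)"
  have powers: "cis (2 * pi * (real x * real h) / real n) / cis (2 * pi * (real y * real h) / real n)
      = ?z ^ h" for h
    by (simp add: cis_divide DeMoivre field_simps)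
  have "?z ^ n = cis (2 * pi * real x) / cis (2 * pi * real y)"
    using n by (simp add: power_divide DeMoivre field_simps)
  then have root: "?z ^ n = 1" by simp
  show ?thesis
  proof (cases "x = y")
    case False
    have "cis (2 * pi * real x / real n) \<noteq> cis (2 * pi * real y / real n)"
      using bij_betw_roots_unity[OF n] False assms unfolding bij_betw_def inj_on_def by auto
    then have "?z \<noteq> 1" by (metis cis_neq_zero nonzero_divide_eq_eq mult_1 mult.commute)
    then show ?thesis using False root by (simp add: powers sum_gp_strict)
  qed simp
qed

lemma fourier_orthogonal:
  assumes "x \<in> grp ns" "y \<in> grp ns"
  shows "(\<Sum>k\<in>grp ns. fourier ns x k / fourier ns y k) = (if x = y then of_nat (card (grp ns)) else 0)"
  using assms
proof (induction ns arbitrary: x y)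
  case Nil then show ?case by (simp add: grp_Nil fourier_def)
next
  case (Cons n ns)
  from Cons.prems obtain x0 xs where x: "x = x0 # xs" "x0 < n" "xs \<in> grp ns"
    by (auto simp: grp_Cons)
  from Cons.prems obtain y0 ys where y: "y = y0 # ys" "y0 < n" "ys \<in> grp ns"
    by (auto simp: grp_Cons)
  have "(\<Sum>k\<in>grp (n # ns). fourier (n # ns) x k / fourier (n # ns) y k)
     = (\<Sum>h<n. cis (2 * pi * real (x0 * h) / real n) / cis (2 * pi * real (y0 * h) / real n))
       * (\<Sum>t\<in>grp ns. fourier ns xs t / fourier ns ys t)"
    by (simp add: sum_grp_Cons x y fourier_Cons sum_product)
  also have "\<dots> = (if x = y then of_nat (card (grp (n # ns))) else 0)"
    using x y by (simp add: sum_cis_roots_of_unity_ratio Cons.IH card_grp)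
  finally show ?case .
qed

lemma fourier_orthogonal':
  assumes "x \<in> grp ns" "y \<in> grp ns"
  shows "(\<Sum>k\<in>grp ns. fourier ns k x / fourier ns k y) = (if x = y then of_nat (card (grp ns)) else 0)"
  using fourier_orthogonal[OF assms] by (simp add: fourier_commute)

lemma cis_mod_diff:
  assumes n: "0 < n" and l: "l < n"
  shows "cis (2 * pi * (real x * real ((k + (n - l)) mod n)) / real n)
       = cis (2 * pi * (real x * real k) / real n) / cis (2 * pi * (real x * real l) / real n)"
proof -
  define m where "m = k + (n - l)"
  have "real m = real n * real (m div n) + real (m mod n)"
    by (metis div_mult_mod_eq mult.commute of_nat_add of_nat_mult)
  moreover have "real m = real k + real n - real l" using l unfolding m_def by simp
  ultimately have mod_eq: "real (m mod n) = real k + real n - real l - real n * real (m div n)"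
    by simp
  define z :: int where "z = int x - int x * int (m div n)"
  have "2 * pi * (real x * real (m mod n)) / real n
      = (2 * pi * (real x * real k) / real n - 2 * pi * (real x * real l) / real n) + 2 * pi * real_of_int z"
    using n unfolding mod_eq z_def by (simp add: field_simps)
  then have "cis (2 * pi * (real x * real (m mod n)) / real n)
      = cis (2 * pi * (real x * real k) / real n - 2 * pi * (real x * real l) / real n)
        * cis (2 * pi * real_of_int z)"
    by (simp only: cis_mult)
  then show ?thesis unfolding m_def by (simp add: cis_divide)
qed

lemma fourier_grp_diff_right:
  assumes "\<forall>n\<in>set ns. 0 < n" "k \<in> grp ns" "l \<in> grp ns"
  shows "fourier ns x (grp_diff ns k l) = fourier ns x k / fourier ns x l"
proof -
  have "fourier ns x (grp_diff ns k l)
     = (\<Prod>t<length ns. cis (2 * pi * (real (x!t) * real (k!t)) / real (ns!t))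
         / cis (2 * pi * (real (x!t) * real (l!t)) / real (ns!t)))"
    unfolding fourier_def grp_diff_def
  proof (rule prod.cong[OF refl])
    fix t assume t: "t \<in> {..<length ns}"
    then have "0 < ns ! t" "l ! t < ns ! t" using assms by (auto simp: grp_def)
    then show "cis (2 * pi * real (x ! t * map (\<lambda>k'. (k ! k' + (ns ! k' - l ! k')) mod ns ! k')
          [0..<length ns] ! t) / real (ns ! t))
      = cis (2 * pi * (real (x!t) * real (k!t)) / real (ns!t))
        / cis (2 * pi * (real (x!t) * real (l!t)) / real (ns!t))"
      using t cis_mod_diff[of "ns!t" "l!t" "x!t" "k!t"] by simp
  qed
  also have "\<dots> = fourier ns x k / fourier ns x l"
    unfolding fourier_def by (simp add: prod_dividef)
  finally show ?thesis .
qed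

lemma fourier_grp_diff:
  assumes "\<forall>n\<in>set ns. 0 < n" "i \<in> grp ns" "j \<in> grp ns" "k \<in> grp ns" "l \<in> grp ns"
  shows "fourier ns (grp_diff ns i j) (grp_diff ns k l)
       = (fourier ns i k / fourier ns i l) * (fourier ns j l / fourier ns j k)"
proof -
  have "fourier ns (grp_diff ns i j) z = fourier ns i z / fourier ns j z" for z
    using fourier_grp_diff_right[OF assms(1-3), of z] by (simp add: fourier_commute)
  then show ?thesis
    using assms by (simp add: fourier_grp_diff_right fourier_neq_zero field_simps)
qed

subsection \<open>Projections onto spans of orthogonal families\<close>

text \<open>If the vectors \<open>A s\<close> are pairwise orthogonal with squared norm \<open>E\<close>, this is the
  orthogonal projection onto the span of \<open>{A s | s \<in> S}\<close>.\<close>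

definition orth_proj :: "'s set \<Rightarrow> ('s \<Rightarrow> idx \<Rightarrow> complex) \<Rightarrow> complex \<Rightarrow> cmat" where
  "orth_proj S A E = (\<lambda>p q. (\<Sum>s\<in>S. A s p * cnj (A s q)) / E)"

lemma mmult_orth_proj:
  assumes fin: "finite I" "finite S" "finite T" and E: "E \<noteq> 0"
    and orth: "\<And>s t. s \<in> S \<Longrightarrow> t \<in> T \<Longrightarrow> (\<Sum>r\<in>I. cnj (A s r) * A t r) = (if s = t then E else 0)"
  shows "mmult I (orth_proj S A E) (orth_proj T A E) p q = orth_proj (S \<inter> T) A E p q"
proof -
  have "mmult I (orth_proj S A E) (orth_proj T A E) p q
      = (\<Sum>r\<in>I. \<Sum>s\<in>S. \<Sum>t\<in>T. A s p * cnj (A t q) * (cnj (A s r) * A t r) / (E * E))"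
    unfolding mmult_def orth_proj_def
    by (simp add: sum_distrib_left sum_distrib_right sum_divide_distrib[symmetric] mult_ac)
  also have "\<dots> = (\<Sum>s\<in>S. \<Sum>t\<in>T. \<Sum>r\<in>I. A s p * cnj (A t q) * (cnj (A s r) * A t r) / (E * E))"
    by (simp add: sum.swap[of _ I] sum.swap[of _ I T])
  also have "\<dots> = (\<Sum>s\<in>S. \<Sum>t\<in>T. A s p * cnj (A t q) * (\<Sum>r\<in>I. cnj (A s r) * A t r) / (E * E))"
    by (simp add: sum_distrib_left sum_divide_distrib)
  also have "\<dots> = (\<Sum>s\<in>S. \<Sum>t\<in>T. if s = t then A s p * cnj (A t q) * E / (E * E) else 0)"
    by (intro sum.cong refl) (simp add: orth)
  also have "\<dots> = (\<Sum>s\<in>S. (if s \<in> T then A s p * cnj (A s q) else 0) / E)"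
    using fin E by (intro sum.cong refl) (simp add: sum.delta)
  also have "\<dots> = orth_proj (S \<inter> T) A E p q"
    unfolding orth_proj_def using fin by (simp add: sum.inter_restrict sum_divide_distrib)
  finally show ?thesis .
qed

lemma meq_mmult_orth_proj:
  assumes fin: "finite I" "finite S" "finite T" and E: "E \<noteq> 0" and ST: "S \<subseteq> F" "T \<subseteq> F"
    and orth: "\<And>s t. s \<in> F \<Longrightarrow> t \<in> F \<Longrightarrow> (\<Sum>r\<in>I. cnj (A s r) * A t r) = (if s = t then E else 0)"
    and P: "meq I P (orth_proj S A E)" and R: "meq I R (orth_proj T A E)"
  shows "meq I (mmult I P R) (orth_proj (S \<inter> T) A E)"
  unfolding meq_def
proof (intro ballI)
  fix p q assume pq: "p \<in> I" "q \<in> I"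
  have "mmult I P R p q = mmult I (orth_proj S A E) (orth_proj T A E) p q"
    using P R pq unfolding mmult_def meq_def by (intro sum.cong) auto
  also have "\<dots> = orth_proj (S \<inter> T) A E p q"
    by (rule mmult_orth_proj[OF fin E], rule orth) (use ST in auto)
  finally show "mmult I P R p q = orth_proj (S \<inter> T) A E p q" .
qed

lemma is_proj_orth_proj:
  assumes fin: "finite I" "finite S" and E: "E \<noteq> 0" "cnj E = E"
    and orth: "\<And>s t. s \<in> S \<Longrightarrow> t \<in> S \<Longrightarrow> (\<Sum>r\<in>I. cnj (A s r) * A t r) = (if s = t then E else 0)"
    and P: "meq I P (orth_proj S A E)"
  shows "is_proj I P"
proof -
  have "meq I (mmult I P P) (orth_proj (S \<inter> S) A E)"
    by (rule meq_mmult_orth_proj[OF fin fin(2) E(1) subset_refl subset_refl orth P P])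
  then have "meq I (mmult I P P) P" using P by (simp add: meq_def)
  moreover have "cnj (P q p) = P p q" if "p \<in> I" "q \<in> I" for p q
    using P that E(2) by (simp add: meq_def orth_proj_def mult.commute)
  ultimately show ?thesis unfolding is_proj_def by blast
qed

lemma meq_idxsetI:
  assumes "\<And>k c l d. k \<in> grp ns \<Longrightarrow> c \<in> grp ms \<Longrightarrow> l \<in> grp ns \<Longrightarrow> d \<in> grp ms
      \<Longrightarrow> A (k, c) (l, d) = B (k, c) (l, d)"
  shows "meq (idxset ns ms) A B"
  unfolding meq_def idxset_def using assms by auto

lemma unimodular_cnj:
  assumes "norm (z::complex) = 1"
  shows "cnj z = 1 / z"
proof -
  have "z * cnj z = 1" using assms complex_norm_square[of z] by simp
  then show ?thesis by (metis divide_eq_eq mult.commute mult_zero_left zero_neq_one)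
qed

locale wm_setting =
  fixes ns ms :: "nat list" and Q :: "nat list \<Rightarrow> nat list \<Rightarrow> complex"
  assumes moduli_X_pos: "\<forall>n\<in>set ns. 0 < n" and moduli_Y_pos: "\<forall>m\<in>set ms. 0 < m"
    and unimodular_Q: "\<forall>i\<in>grp ns. \<forall>c\<in>grp ms. cmod (Q i c) = 1"
begin

abbreviation "X \<equiv> grp ns"
abbreviation "Y \<equiv> grp ms"
abbreviation "I \<equiv> idxset ns ms"
abbreviation "E \<equiv> of_nat (card X) * of_nat (card Y) :: complex"

definition wvec :: "nat list \<Rightarrow> nat list \<Rightarrow> nat list \<times> nat list \<Rightarrow> idx \<Rightarrow> complex" where
  "wvec i b = (\<lambda>(a, j) (k, c). Q i c / Q j c * (fourier ns i k / fourier ns j k)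
       * (fourier ms a c / fourier ms b c))"

definition Umat :: "nat list \<Rightarrow> nat list \<Rightarrow> nat list \<Rightarrow> cmat" where
  "Umat i a b = (\<lambda>p q. \<Sum>j\<in>X. Wm ns ms Q i a j b p q)"

definition Vmat :: "nat list \<Rightarrow> nat list \<Rightarrow> cmat" where
  "Vmat i j = (\<lambda>(k, c) (l, d). if c = d then
      fourier ns (grp_diff ns i j) (grp_diff ns k l) / of_nat (card X) else 0)"

lemma Q_neq_zero: "i \<in> X \<Longrightarrow> c \<in> Y \<Longrightarrow> Q i c \<noteq> 0"
  using unimodular_Q by fastforce

lemma E_neq_zero: "E \<noteq> 0"
  using card_grp_pos[OF moduli_X_pos] card_grp_pos[OF moduli_Y_pos] by simp

lemma finite_I: "finite I"
  by (simp add: idxset_def finite_grp)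

lemma cnj_wvec:
  assumes "i \<in> X" "j \<in> X" "a \<in> Y" "b \<in> Y" "k \<in> X" "c \<in> Y"
  shows "cnj (wvec i b (a, j) (k, c)) = 1 / wvec i b (a, j) (k, c)"
  by (rule unimodular_cnj)
    (use assms unimodular_Q in \<open>simp add: wvec_def norm_mult norm_divide norm_fourier\<close>)

lemma Wm_eq_wvec:
  assumes "i \<in> X" "j \<in> X" "a \<in> Y" "b \<in> Y" "k \<in> X" "c \<in> Y" "l \<in> X" "d \<in> Y"
  shows "Wm ns ms Q i a j b (k, c) (l, d) = wvec i b (a, j) (k, c) * cnj (wvec i b (a, j) (l, d)) / E"
  unfolding cnj_wvec[OF assms(1-4,7,8)] using assms
  by (simp add: Wm_def wvec_def fourier_grp_diff[OF moduli_X_pos]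
      fourier_grp_diff[OF moduli_Y_pos] fourier_neq_zero Q_neq_zero field_simps)

lemma wvec_orthogonal:
  assumes i: "i \<in> X" and b: "b \<in> Y" and s: "s \<in> Y \<times> X" and t: "t \<in> Y \<times> X"
  shows "(\<Sum>r\<in>I. cnj (wvec i b s r) * wvec i b t r) = (if s = t then E else 0)"
proof -
  obtain a j where s': "s = (a, j)" "a \<in> Y" "j \<in> X" using s by auto
  obtain a' j' where t': "t = (a', j')" "a' \<in> Y" "j' \<in> X" using t by auto
  let ?G = "\<lambda>c. Q j c / Q j' c * (fourier ms a' c / fourier ms a c)"
  let ?H = "\<lambda>k. fourier ns j k / fourier ns j' k"
  have "cnj (wvec i b s (k, c)) * wvec i b t (k, c) = ?G c * ?H k" if "k \<in> X" "c \<in> Y" for k c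
    unfolding s'(1) cnj_wvec[OF i s'(3) s'(2) b that] using that i b s' t'
    by (simp add: wvec_def fourier_neq_zero Q_neq_zero field_simps)
  then have "(\<Sum>r\<in>I. cnj (wvec i b s r) * wvec i b t r) = (\<Sum>(k, c)\<in>X \<times> Y. ?G c * ?H k)"
    unfolding idxset_def by (intro sum.cong refl) auto
  also have "\<dots> = (\<Sum>k\<in>X. \<Sum>c\<in>Y. ?G c * ?H k)"
    by (rule sum.cartesian_product[symmetric])
  also have "\<dots> = (\<Sum>c\<in>Y. ?G c * (\<Sum>k\<in>X. ?H k))"
    by (subst sum.swap) (simp add: sum_distrib_left)
  also have "\<dots> = (if j = j' then (\<Sum>c\<in>Y. fourier ms a' c / fourier ms a c) * of_nat (card X) else 0)"
    using fourier_orthogonal[OF s'(3) t'(3)] s' t'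
    by (auto simp: Q_neq_zero sum_distrib_right intro: sum.cong)
  also have "\<dots> = (if s = t then E else 0)"
    using fourier_orthogonal[OF t'(2) s'(2)] s' t' by auto
  finally show ?thesis .
qed

lemma Wm_factor:
  assumes "a \<in> Y" "b \<in> Y" "c \<in> Y" "d \<in> Y"
  shows "Wm ns ms Q i a j b (k, c) (l, d)
     = (Q i c * Q j d / (Q i d * Q j c)) * fourier ns (grp_diff ns i j) (grp_diff ns k l) / E
       * (fourier ms a c / fourier ms a d) * (fourier ms b d / fourier ms b c)"
  using assms by (simp add: Wm_def fourier_grp_diff[OF moduli_Y_pos] mult_ac)

lemma sum_Wm_left:
  assumes "i \<in> X" "j \<in> X" "b \<in> Y" "k \<in> X" "l \<in> X" "c \<in> Y" "d \<in> Y"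
  shows "(\<Sum>a\<in>Y. Wm ns ms Q i a j b (k, c) (l, d)) = Vmat i j (k, c) (l, d)"
proof -
  let ?K = "(Q i c * Q j d / (Q i d * Q j c)) * fourier ns (grp_diff ns i j) (grp_diff ns k l) / E
     * (fourier ms b d / fourier ms b c)"
  have "(\<Sum>a\<in>Y. Wm ns ms Q i a j b (k, c) (l, d)) = (\<Sum>a\<in>Y. ?K * (fourier ms a c / fourier ms a d))"
    using assms by (intro sum.cong refl) (simp add: Wm_factor mult_ac)
  also have "\<dots> = ?K * (\<Sum>a\<in>Y. fourier ms a c / fourier ms a d)"
    by (simp only: sum_distrib_left)
  also have "\<dots> = Vmat i j (k, c) (l, d)"
    using assms E_neq_zero
    by (simp add: fourier_orthogonal' Vmat_def Q_neq_zero fourier_neq_zero)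
  finally show ?thesis .
qed

lemma sum_Wm_right:
  assumes "i \<in> X" "j \<in> X" "a \<in> Y" "k \<in> X" "l \<in> X" "c \<in> Y" "d \<in> Y"
  shows "(\<Sum>b\<in>Y. Wm ns ms Q i a j b (k, c) (l, d)) = Vmat i j (k, c) (l, d)"
proof -
  let ?K = "(Q i c * Q j d / (Q i d * Q j c)) * fourier ns (grp_diff ns i j) (grp_diff ns k l) / E
     * (fourier ms a c / fourier ms a d)"
  have "(\<Sum>b\<in>Y. Wm ns ms Q i a j b (k, c) (l, d)) = (\<Sum>b\<in>Y. ?K * (fourier ms b d / fourier ms b c))"
    using assms by (intro sum.cong refl) (simp add: Wm_factor mult_ac)
  also have "\<dots> = ?K * (\<Sum>b\<in>Y. fourier ms b d / fourier ms b c)"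
    by (simp only: sum_distrib_left)
  also have "\<dots> = Vmat i j (k, c) (l, d)"
    using assms E_neq_zero
    by (auto simp: fourier_orthogonal' Vmat_def Q_neq_zero fourier_neq_zero)
  finally show ?thesis .
qed

lemma meq_Vmat_sum_Wm:
  assumes "i \<in> X" "j \<in> X" "b \<in> Y"
  shows "meq I (Vmat i j) (\<lambda>p q. \<Sum>a\<in>Y. Wm ns ms Q i a j b p q)"
  by (rule meq_idxsetI) (simp add: sum_Wm_left assms)

lemma sum_Vmat_right:
  assumes "i \<in> X" "k \<in> X" "l \<in> X" "c \<in> Y" "d \<in> Y"
  shows "(\<Sum>j\<in>X. Vmat i j (k, c) (l, d)) = mone (k, c) (l, d)"
proof (cases "c = d")
  case True
  have "(\<Sum>j\<in>X. Vmat i j (k, c) (l, d))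
      = (fourier ns i k / fourier ns i l) * (\<Sum>j\<in>X. fourier ns j l / fourier ns j k) / of_nat (card X)"
    using assms True
    by (simp add: Vmat_def fourier_grp_diff[OF moduli_X_pos] sum_distrib_left sum_divide_distrib)
  also have "\<dots> = mone (k, c) (l, d)"
    using assms True E_neq_zero by (simp add: fourier_orthogonal' mone_def fourier_neq_zero)
  finally show ?thesis .
qed (simp add: Vmat_def mone_def)

lemma sum_Vmat_left:
  assumes "j \<in> X" "k \<in> X" "l \<in> X" "c \<in> Y" "d \<in> Y"
  shows "(\<Sum>i\<in>X. Vmat i j (k, c) (l, d)) = mone (k, c) (l, d)"
proof (cases "c = d")
  case True
  have "(\<Sum>i\<in>X. Vmat i j (k, c) (l, d))
      = (fourier ns j l / fourier ns j k) * (\<Sum>i\<in>X. fourier ns i k / fourier ns i l) / of_nat (card X)"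
    using assms True
    by (simp add: Vmat_def fourier_grp_diff[OF moduli_X_pos] sum_distrib_left sum_divide_distrib mult.commute)
  also have "\<dots> = mone (k, c) (l, d)"
    using assms True E_neq_zero by (simp add: fourier_orthogonal' mone_def fourier_neq_zero)
  finally show ?thesis .
qed (simp add: Vmat_def mone_def)

lemma Wm_orth_proj:
  assumes "i \<in> X" "j \<in> X" "a \<in> Y" "b \<in> Y"
  shows "meq I (Wm ns ms Q i a j b) (orth_proj {(a, j)} (wvec i b) E)"
  by (rule meq_idxsetI) (simp add: orth_proj_def Wm_eq_wvec assms)

lemma Umat_orth_proj:
  assumes "i \<in> X" "a \<in> Y" "b \<in> Y"
  shows "meq I (Umat i a b) (orth_proj ({a} \<times> X) (wvec i b) E)"
  by (rule meq_idxsetI)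
    (simp add: Umat_def orth_proj_def Wm_eq_wvec assms sum.cartesian_product' sum_divide_distrib)

lemma Vmat_orth_proj:
  assumes "i \<in> X" "j \<in> X" "b \<in> Y"
  shows "meq I (Vmat i j) (orth_proj (Y \<times> {j}) (wvec i b) E)"
proof (rule meq_idxsetI)
  fix k c l d assume "k \<in> X" "c \<in> Y" "l \<in> X" "d \<in> Y"
  with assms show "Vmat i j (k, c) (l, d) = orth_proj (Y \<times> {j}) (wvec i b) E (k, c) (l, d)"
    by (simp add: sum_Wm_left[symmetric] orth_proj_def Wm_eq_wvec sum.cartesian_product'
        sum_divide_distrib)
qed

lemma is_proj_Umat: "i \<in> X \<Longrightarrow> a \<in> Y \<Longrightarrow> b \<in> Y \<Longrightarrow> is_proj I (Umat i a b)"
  by (rule is_proj_orth_proj[OF finite_I _ E_neq_zero _ wvec_orthogonal Umat_orth_proj])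
    (auto simp: finite_grp)

lemma is_proj_Vmat:
  assumes "i \<in> X" "j \<in> X"
  shows "is_proj I (Vmat i j)"
proof -
  have b: "replicate (length ms) 0 \<in> Y" by (rule replicate_zero_in_grp[OF moduli_Y_pos])
  show ?thesis
    by (rule is_proj_orth_proj[OF finite_I _ E_neq_zero _ wvec_orthogonal Vmat_orth_proj[OF _ _ b]])
      (use assms b in \<open>auto simp: finite_grp\<close>)
qed

lemma magic_Umat:
  assumes i: "i \<in> X"
  shows "magic I Y (Umat i)"
proof -
  have rows: "(\<Sum>b\<in>Y. Umat i a b (k, c) (l, d)) = mone (k, c) (l, d)"
    if "a \<in> Y" "k \<in> X" "c \<in> Y" "l \<in> X" "d \<in> Y" for a k c l d
  proof -
    have "(\<Sum>b\<in>Y. Umat i a b (k, c) (l, d)) = (\<Sum>j\<in>X. \<Sum>b\<in>Y. Wm ns ms Q i a j b (k, c) (l, d))"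
      unfolding Umat_def by (rule sum.swap)
    then show ?thesis using i that by (simp add: sum_Wm_right sum_Vmat_right)
  qed
  have cols: "(\<Sum>a\<in>Y. Umat i a b (k, c) (l, d)) = mone (k, c) (l, d)"
    if "b \<in> Y" "k \<in> X" "c \<in> Y" "l \<in> X" "d \<in> Y" for b k c l d
  proof -
    have "(\<Sum>a\<in>Y. Umat i a b (k, c) (l, d)) = (\<Sum>j\<in>X. \<Sum>a\<in>Y. Wm ns ms Q i a j b (k, c) (l, d))"
      unfolding Umat_def by (rule sum.swap)
    then show ?thesis using i that by (simp add: sum_Wm_left sum_Vmat_right)
  qed
  show ?thesis
    unfolding magic_def by (auto simp: is_proj_Umat i intro!: meq_idxsetI rows cols)
qed

lemma magic_Vmat: "magic I X Vmat"
  unfolding magic_def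
  by (auto simp: is_proj_Vmat sum_Vmat_right sum_Vmat_left intro!: meq_idxsetI)

lemma Umat_times_Vmat:
  assumes "i \<in> X" "j \<in> X" "a \<in> Y" "b \<in> Y"
  shows "meq I (mmult I (Umat i a b) (Vmat i j)) (Wm ns ms Q i a j b)"
    and "meq I (mmult I (Vmat i j) (Umat i a b)) (Wm ns ms Q i a j b)"
proof -
  have UV: "meq I (mmult I (Umat i a b) (Vmat i j)) (orth_proj ({a} \<times> X \<inter> Y \<times> {j}) (wvec i b) E)"
    by (rule meq_mmult_orth_proj[OF finite_I _ _ E_neq_zero _ _ wvec_orthogonal
        Umat_orth_proj Vmat_orth_proj]) (use assms in \<open>auto simp: finite_grp\<close>)
  have VU: "meq I (mmult I (Vmat i j) (Umat i a b)) (orth_proj (Y \<times> {j} \<inter> {a} \<times> X) (wvec i b) E)"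
    by (rule meq_mmult_orth_proj[OF finite_I _ _ E_neq_zero _ _ wvec_orthogonal
        Vmat_orth_proj Umat_orth_proj]) (use assms in \<open>auto simp: finite_grp\<close>)
  have "{a} \<times> X \<inter> Y \<times> {j} = {(a, j)}" "Y \<times> {j} \<inter> {a} \<times> X = {(a, j)}"
    using assms by auto
  then show "meq I (mmult I (Umat i a b) (Vmat i j)) (Wm ns ms Q i a j b)"
    and "meq I (mmult I (Vmat i j) (Umat i a b)) (Wm ns ms Q i a j b)"
    using UV VU Wm_orth_proj[OF assms] unfolding meq_def by simp_all
qed

lemma wreath_rep_Umat_Vmat: "wreath_rep ns ms Umat Vmat"
proof -
  have "meq I (Umat i a b) (Umat i c d)" if "grp_diff ms a b = grp_diff ms c d" for i a b c d
    using that by (simp add: Umat_def Wm_def meq_def)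
  moreover have "meq I (Vmat i j) (Vmat k l)" if "grp_diff ns i j = grp_diff ns k l" for i j k l
    unfolding Vmat_def meq_def that by simp
  moreover have "meq I (mmult I (Umat i a b) (Vmat i j)) (mmult I (Vmat i j) (Umat i a b))"
    if "i \<in> X" "j \<in> X" "a \<in> Y" "b \<in> Y" for i j a b
    using Umat_times_Vmat[OF that] unfolding meq_def by simp
  ultimately show ?thesis
    unfolding wreath_rep_def Let_def by (simp add: magic_Umat magic_Vmat)
qed

end

theorem proposition3p6:
  fixes ns ms :: "nat list" and Q :: "nat list \<Rightarrow> nat list \<Rightarrow> complex"
  assumes "\<forall>n\<in>set ns. 0 < n" and "\<forall>m\<in>set ms. 0 < m"
    and "\<forall>i\<in>grp ns. \<forall>c\<in>grp ms. cmod (Q i c) = 1"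
  shows "(\<forall>i\<in>grp ns. \<forall>j\<in>grp ns. \<forall>b\<in>grp ms. \<forall>b'\<in>grp ms.
            meq (idxset ns ms) (\<lambda>p q. \<Sum>a\<in>grp ms. Wm ns ms Q i a j b p q)
                               (\<lambda>p q. \<Sum>a\<in>grp ms. Wm ns ms Q i a j b' p q))
       \<and> (\<exists>U V. wreath_rep ns ms U V
            \<and> (\<forall>i\<in>grp ns. \<forall>a\<in>grp ms. \<forall>b\<in>grp ms.
                 meq (idxset ns ms) (U i a b) (\<lambda>p q. \<Sum>j\<in>grp ns. Wm ns ms Q i a j b p q))
            \<and> (\<forall>i\<in>grp ns. \<forall>j\<in>grp ns. \<forall>b\<in>grp ms.
                 meq (idxset ns ms) (V i j) (\<lambda>p q. \<Sum>a\<in>grp ms. Wm ns ms Q i a j b p q))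
            \<and> (\<forall>i\<in>grp ns. \<forall>j\<in>grp ns. \<forall>a\<in>grp ms. \<forall>b\<in>grp ms.
                 meq (idxset ns ms) (Wm ns ms Q i a j b) (mmult (idxset ns ms) (U i a b) (V i j))))"
proof -
  interpret wm_setting ns ms Q
    using assms by unfold_locales
  have "meq I (\<lambda>p q. \<Sum>a\<in>Y. Wm ns ms Q i a j b p q) (\<lambda>p q. \<Sum>a\<in>Y. Wm ns ms Q i a j b' p q)"
    if "i \<in> X" "j \<in> X" "b \<in> Y" "b' \<in> Y" for i j b b'
    using meq_Vmat_sum_Wm[of i j b] meq_Vmat_sum_Wm[of i j b'] that by (simp add: meq_def)
  moreover have "meq I (Umat i a b) (\<lambda>p q. \<Sum>j\<in>X. Wm ns ms Q i a j b p q)" for i a b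
    by (simp add: Umat_def meq_def)
  moreover have "meq I (Wm ns ms Q i a j b) (mmult I (Umat i a b) (Vmat i j))"
    if "i \<in> X" "j \<in> X" "a \<in> Y" "b \<in> Y" for i j a b
    using Umat_times_Vmat(1)[OF that] by (simp add: meq_def)
  ultimately show ?thesis
    using wreath_rep_Umat_Vmat meq_Vmat_sum_Wm by blast
qed

end
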